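(* Let $n,d\in\mathbb{N}$ with $1\le d$ and $d+1\le n$, and let $\mathbf{X}=\{\mathbf{x}_1,\dots,\mathbf{x}_m\}\subseteq\mathbb{B}^n\setminus\{\mathbf{0}\}$ be any dataset of nonzero boolean vectors. Let $\tilde{\mathbf{K}}^{(d)}$ and $\tilde{\mathbf{K}}^{(d+1)}$ be the $m\times m$ matrices with entries $\tilde\kappa_\vee^d(\mathbf{x}_i,\mathbf{x}_j)$ and $\tilde\kappa_\vee^{d+1}(\mathbf{x}_i,\mathbf{x}_j)$. Then $\tilde\kappa_\vee^d(\mathbf{x}_i,\mathbf{x}_j)^2\le\tilde\kappa_\vee^{d+1}(\mathbf{x}_i,\mathbf{x}_j)^2$ for all $i,j$, and consequently $\mathcal{C}(\tilde{\mathbf{K}}^{(d)})\ge\mathcal{C}(\tilde{\mathbf{K}}^{(d+1)})$. In other words, $\tilde\kappa_\vee^{d+1}$ is more general than $\tilde\kappa_\vee^d$.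
   Context: $\mathbb{B}=\{0,1\}$. $H:\mathbb{R}\to\mathbb{B}$ is the Heaviside function, $H(t)=1$ if $t>0$ and $0$ otherwise. Let $\mathbb{B}_d=\{\mathbf{b}\in\mathbb{B}^n:\|\mathbf{b}\|_1=d\}$. The Disjunctive kernel (D-Kernel) of arity $d$ is $\kappa_\vee^d(\mathbf{x},\mathbf{z})=\langle\phi_\vee^d(\mathbf{x}),\phi_\vee^d(\mathbf{z})\rangle$ where $\phi_\vee^d(\mathbf{x})=(H(\langle\mathbf{x},\mathbf{b}\rangle))_{\mathbf{b}\in\mathbb{B}_d}$ (each feature is the disjunction of the $d$ variables selected by $\mathbf{b}$). Equivalently, writing $|\mathbf{x}|=\langle\mathbf{x},\mathbf{x}\rangle$ for the number of ones, $\kappa_\vee^d(\mathbf{x},\mathbf{z})=\binom{n}{d}-\binom{n-|\mathbf{x}|}{d}-\binom{n-|\mathbf{z}|}{d}+\binom{n-|\mathbf{x}|-|\mathbf{z}|+\langle\mathbf{x},\mathbf{z}\rangle}{d}$. For a kernel $\kappa$, its normalized version is $\tilde\kappa(\mathbf{x},\mathbf{z})=\kappa(\mathbf{x},\mathbf{z})/\sqrt{\kappa(\mathbf{x},\mathbf{x})\kappa(\mathbf{z},\mathbf{z})}$. The spectral ratio of a positive semidefinite matrix $\mathbf{K}\in\mathbb{R}^{m\times m}$ is $\mathcal{C}(\mathbf{K})=\sum_i\mathbf{K}_{ii}/\sqrt{\sum_{i,j}\mathbf{K}_{ij}^2}$. A kernel $\kappa_1$ is said to be more general than $\kappa_2$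 if $\mathcal{C}(\mathbf{K}^{(1)}_{\mathbf{X}})\le\mathcal{C}(\mathbf{K}^{(2)}_{\mathbf{X}})$ for the kernel matrices on the datasets under consideration. *)

theory Defs
  imports Complex_Main
begin

definition boolvec :: "nat \<Rightarrow> (nat \<Rightarrow> nat) \<Rightarrow> bool" where
  "boolvec n x \<longleftrightarrow> (\<forall>i<n. x i \<in> {0,1}) \<and> (\<forall>i\<ge>n. x i = 0)"

definition ip :: "nat \<Rightarrow> (nat \<Rightarrow> nat) \<Rightarrow> (nat \<Rightarrow> nat) \<Rightarrow> nat" where
  "ip n x z = (\<Sum>i<n. x i * z i)"

definition heaviside :: "real \<Rightarrow> real" where
  "heaviside t = (if t > 0 then 1 else 0)"

definition Bd :: "nat \<Rightarrow> nat \<Rightarrow> (nat \<Rightarrow> nat) set" where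
  "Bd n d = {b. boolvec n b \<and> (\<Sum>i<n. b i) = d}"

text \<open>Disjunctive kernel via its feature map.\<close>
definition dkernel :: "nat \<Rightarrow> nat \<Rightarrow> (nat \<Rightarrow> nat) \<Rightarrow> (nat \<Rightarrow> nat) \<Rightarrow> real" where
  "dkernel n d x z = (\<Sum>b\<in>Bd n d. heaviside (real (ip n x b)) * heaviside (real (ip n z b)))"

definition normalize_kernel ::
  "(('a \<Rightarrow> 'a \<Rightarrow> real)) \<Rightarrow> 'a \<Rightarrow> 'a \<Rightarrow> real" where
  "normalize_kernel k x z = k x z / sqrt (k x x * k z z)"

definition spectral_ratio :: "nat \<Rightarrow> (nat \<Rightarrow> nat \<Rightarrow> real) \<Rightarrow> real" where
  "spectral_ratio m K = (\<Sum>i<m. K i i) / sqrt (\<Sum>i<m. \<Sum>j<m. (K i j)\<^sup>2)"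

end

theory Submission
  imports Defs "HOL-Library.Indicator_Function"
begin

text \<open>Let \<open>a\<close>, \<open>b\<close>, \<open>u\<close> be the numbers of ones of \<open>x\<close>, \<open>z\<close> and \<open>x \<or> z\<close>. By
  inclusion-exclusion over the features, \<open>\<kappa>\<^sup>d(x, z) = h\<^sub>d(a) + h\<^sub>d(b) - h\<^sub>d(u)\<close>, where
  \<open>h\<^sub>d(k) = C(n, d) - C(n - k, d)\<close>. The ratio \<open>h\<^sub>d\<^sub>+\<^sub>1(k) / h\<^sub>d(k)\<close> is nonincreasing in \<open>k\<close>,
  so passing from \<open>d\<close> to \<open>d + 1\<close> rescales \<open>h(u)\<close> by a smaller factor than \<open>h(a)\<close> and
  \<open>h(b)\<close>; comparing all three factors with the geometric mean of the last two shows that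
  the normalized kernel \<open>(h(a) + h(b) - h(u)) / \<surd>(h(a) h(b))\<close> can only grow. The normalized
  kernels are nonnegative with unit diagonal, so the entrywise squares grow while the trace
  stays \<open>m\<close>, and the spectral ratio decreases.\<close>

definition ones :: "nat \<Rightarrow> (nat \<Rightarrow> nat) \<Rightarrow> nat set" where
  "ones n x = {i. i < n \<and> x i = 1}"

lemma ones_subset: "ones n x \<subseteq> {..<n}"
  unfolding ones_def by auto

lemma finite_ones [simp]: "finite (ones n x)"
  using finite_subset[OF ones_subset] by blast

lemma boolvec_eq_indicator_ones:
  assumes "boolvec n b"
  shows "b = indicator (ones n b)"
  using assms unfolding boolvec_def ones_def indicator_def
  by (auto simp: fun_eq_iff) (metis not_le)

lemma boolvec_indicator:
  assumes "S \<subseteq> {..<n}"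
  shows "boolvec n (indicator S)"
  using assms unfolding boolvec_def by (auto simp: indicator_def)

lemma sum_indicator_lessThan:
  fixes n :: nat
  assumes "S \<subseteq> {..<n}"
  shows "(\<Sum>i<n. indicator S i :: nat) = card S"
  using sum_indicator_eq_card[of "{..<n}" S] assms by (simp add: Int_absorb1)

lemma inj_indicator: "inj (indicator :: 'a set \<Rightarrow> 'a \<Rightarrow> nat)"
  by (rule injI) (metis indicator_eq_1_iff subsetI subset_antisym)

lemma card_Bd_vanishing_on:
  assumes "A \<subseteq> {..<n}"
  shows "card {b \<in> Bd n d. \<forall>i\<in>A. b i = 0} = (n - card A) choose d"
proof -
  let ?E = "{..<n} - A"
  have "{b \<in> Bd n d. \<forall>i\<in>A. b i = 0} = indicator ` {S. S \<subseteq> ?E \<and> card S = d}"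
  proof (intro set_eqI iffI)
    fix b assume b: "b \<in> {b \<in> Bd n d. \<forall>i\<in>A. b i = 0}"
    then have bv: "boolvec n b" and "(\<Sum>i<n. b i) = d" by (auto simp: Bd_def)
    then have "card (ones n b) = d"
      using sum_indicator_lessThan[OF ones_subset] boolvec_eq_indicator_ones by metis
    moreover have "ones n b \<subseteq> ?E" using b by (auto simp: ones_def)
    ultimately show "b \<in> indicator ` {S. S \<subseteq> ?E \<and> card S = d}"
      using boolvec_eq_indicator_ones[OF bv] by blast
  next
    fix b :: "nat \<Rightarrow> nat" assume "b \<in> indicator ` {S. S \<subseteq> ?E \<and> card S = d}"
    then obtain S where S: "S \<subseteq> ?E" "card S = d" and b: "b = indicator S" by blast
    then have "S \<subseteq> {..<n}" by blast
    with S show "b \<in> {b \<in> Bd n d. \<forall>i\<in>A. b i = 0}"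
      unfolding b Bd_def by (auto simp: boolvec_indicator sum_indicator_lessThan indicator_eq_0_iff)
  qed
  also have "card \<dots> = card ?E choose d"
    by (simp add: card_image inj_on_subset[OF inj_indicator] n_subsets)
  also have "card ?E = n - card A"
    using assms by (simp add: card_Diff_subset finite_subset)
  finally show ?thesis .
qed

lemma finite_Bd: "finite (Bd n d)"
proof (rule finite_subset)
  show "Bd n d \<subseteq> indicator ` Pow {..<n}"
    unfolding Bd_def using boolvec_eq_indicator_ones ones_subset by blast
qed simp

lemma heaviside_ip_boolvec:
  assumes "boolvec n x"
  shows "heaviside (real (ip n x b)) = 1 - of_bool (\<forall>i\<in>ones n x. b i = 0)"
proof -
  have "ip n x b = 0 \<longleftrightarrow> (\<forall>i\<in>ones n x. b i = 0)"
    using assms unfolding ip_def ones_def boolvec_def by (auto, force)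
  then show ?thesis unfolding heaviside_def by auto
qed

text \<open>The number of \<open>d\<close>-subsets of an \<open>N\<close>-set that meet a fixed \<open>k\<close>-subset.\<close>
definition hits :: "nat \<Rightarrow> nat \<Rightarrow> nat \<Rightarrow> real" where
  "hits N d k = real (N choose d) - real ((N - k) choose d)"

lemma dkernel_eq_hits:
  assumes x: "boolvec n x" and z: "boolvec n z"
  shows "dkernel n d x z = hits n d (card (ones n x)) + hits n d (card (ones n z))
                            - hits n d (card (ones n x \<union> ones n z))"
proof -
  define avoids where "avoids A b \<longleftrightarrow> (\<forall>i\<in>A. b i = 0)" for A and b :: "nat \<Rightarrow> nat"
  have card_avoids: "real (card {b \<in> Bd n d. avoids A b}) = real ((n - card A) choose d)"
    if "A \<subseteq> {..<n}" for A
    using card_Bd_vanishing_on[OF that] by (simp add: avoids_def)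
  have "dkernel n d x z = (\<Sum>b\<in>Bd n d. 1 - of_bool (avoids (ones n x) b)
          - of_bool (avoids (ones n z) b) + of_bool (avoids (ones n x \<union> ones n z) b))"
    unfolding dkernel_def heaviside_ip_boolvec[OF x] heaviside_ip_boolvec[OF z]
    by (intro sum.cong) (auto simp: avoids_def)
  also have "\<dots> = real (card {b \<in> Bd n d. avoids {} b}) - real (card {b \<in> Bd n d. avoids (ones n x) b})
      - real (card {b \<in> Bd n d. avoids (ones n z) b})
      + real (card {b \<in> Bd n d. avoids (ones n x \<union> ones n z) b})"
    using finite_Bd by (simp add: sum.distrib sum_subtractf of_bool_def sum.If_cases Int_def
        conj_commute avoids_def)
  finally show ?thesis
    unfolding hits_def using ones_subset by (simp add: card_avoids)
qed

lemma of_nat_binomial_Suc_absorb: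
  "(real d + 1) * real (m choose (d + 1)) = (real m - real d) * real (m choose d)"
proof (cases "d \<le> m")
  case True
  have "Suc d * (m choose Suc d) = (m - d) * (m choose d)"
    using binomial_absorption[of d m] binomial_absorb_comp[of m d] by simp
  then have "real (Suc d * (m choose Suc d)) = real ((m - d) * (m choose d))" by simp
  then show ?thesis using True by (simp add: algebra_simps)
qed (simp add: binomial_eq_0)

lemma of_nat_binomial_absorb_comp:
  "real m * real ((m - 1) choose d) = (real m - real d) * real (m choose d)"
proof (cases "d \<le> m")
  case True
  have "real ((m - d) * (m choose d)) = real (m * ((m - 1) choose d))"
    by (simp only: binomial_absorb_comp)
  then show ?thesis using True by simp
qed (simp add: binomial_eq_0)

lemma binomial_Suc_le_diff: "N choose (d + 1) \<le> ((N - k) choose (d + 1)) + k * (N choose d)"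
proof (induction k)
  case (Suc k)
  show ?case
  proof (cases "k < N")
    case True
    then have "(N - k) choose (d + 1) = ((N - Suc k) choose d) + ((N - Suc k) choose (d + 1))"
      by (metis Suc_diff_Suc binomial_Suc_Suc Suc_eq_plus1)
    moreover have "(N - Suc k) choose d \<le> N choose d" by (rule binomial_right_mono) simp
    ultimately show ?thesis using Suc by simp
  qed (use Suc in simp)
qed simp

lemma hits_pos:
  assumes "1 \<le> d" "d \<le> N" "1 \<le> k"
  shows "hits N d k > 0"
proof -
  have "N = Suc (N - 1)" "d = Suc (d - 1)" using assms by auto
  then have "N choose d = ((N - 1) choose (d - 1)) + ((N - 1) choose d)"
    by (metis binomial_Suc_Suc)
  moreover have "(N - 1) choose (d - 1) > 0" using assms by (intro zero_less_binomial) simp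
  moreover have "(N - k) choose d \<le> (N - 1) choose d" using assms by (intro binomial_right_mono) simp
  ultimately show ?thesis unfolding hits_def by linarith
qed

lemma hits_mono: "k \<le> u \<Longrightarrow> hits N d k \<le> hits N d u"
  unfolding hits_def using binomial_right_mono[of "N - u" "N - k" d] by simp

definition avoid_weight :: "nat \<Rightarrow> nat \<Rightarrow> nat \<Rightarrow> real" where
  "avoid_weight N d k = real k * real ((N - k) choose d) / hits N d k"

lemma hits_Suc_ratio_eq:
  assumes "1 \<le> d" "d + 1 \<le> N" "1 \<le> k" "k \<le> N"
  shows "hits N (d + 1) k / hits N d k = (real N - real d + avoid_weight N d k) / (real d + 1)"
proof -
  have H: "hits N d k > 0" using hits_pos assms by simp
  have "(real N - real d + avoid_weight N d k) / (real d + 1)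
      = ((real N - real d) * hits N d k + real k * real ((N - k) choose d)) / (hits N d k * (real d + 1))"
    using H unfolding avoid_weight_def by (simp add: field_simps)
  also have "\<dots> = (real d + 1) * hits N (d + 1) k / (hits N d k * (real d + 1))"
    using of_nat_binomial_Suc_absorb[of d N] of_nat_binomial_Suc_absorb[of d "N - k"] assms
    by (simp add: hits_def algebra_simps)
  finally show ?thesis by simp
qed

lemma avoid_weight_Suc_le:
  assumes "1 \<le> d" "d + 1 \<le> N" "1 \<le> k" "k + 1 \<le> N"
  shows "avoid_weight N d (Suc k) \<le> avoid_weight N d k"
proof -
  define T where "T = real (N choose d)"
  define T' where "T' = real (N choose (d + 1))"
  define c where "c = real ((N - k) choose d)"
  define c' where "c' = real ((N - k) choose (d + 1))"
  define c1 where "c1 = real ((N - Suc k) choose d)"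
  have a1: "(real N - real k) * c1 = (real N - real k - real d) * c"
    using of_nat_binomial_absorb_comp[of "N - k" d] assms
    by (simp add: c_def c1_def Suc_diff_Suc)
  have a2: "(real d + 1) * c' = (real N - real k - real d) * c"
    using of_nat_binomial_Suc_absorb[of d "N - k"] assms by (simp add: c_def c'_def)
  have a3: "(real d + 1) * T' = (real N - real d) * T"
    using of_nat_binomial_Suc_absorb[of d N] by (simp add: T_def T'_def)
  text \<open>By the absorption identities the cross-multiplied difference is a nonnegative
    multiple of \<open>k T - T' + c'\<close>, i.e. of the bound \<open>binomial_Suc_le_diff\<close>.\<close>
  have "T' \<le> c' + real k * T"
    unfolding T_def T'_def c'_def using binomial_Suc_le_diff[of N d k]
    by (metis of_nat_add of_nat_le_iff of_nat_mult)
  then have "0 \<le> (real d + 1) * c * (real k * T - T' + c')"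
    by (simp add: c_def)
  also have "\<dots> = (real N - real k) * (real k * c * (T - c1) - (real k + 1) * c1 * (T - c))"
    using a1 a2 a3 by algebra
  finally have "(real k + 1) * c1 * (T - c) \<le> real k * c * (T - c1)"
    using assms by (simp add: zero_le_mult_iff)
  then have "real (Suc k) * c1 * hits N d k \<le> real k * c * hits N d (Suc k)"
    by (simp add: hits_def T_def c_def c1_def add.commute)
  moreover have "hits N d k > 0" "hits N d (Suc k) > 0" using hits_pos assms by auto
  ultimately show ?thesis
    unfolding avoid_weight_def c_def c1_def
    by (simp add: divide_le_eq le_divide_eq mult.commute mult.left_commute)
qed

lemma hits_Suc_ratio_antimono:
  assumes "1 \<le> d" "d + 1 \<le> N" "1 \<le> a" "a \<le> u" "u \<le> N"
  shows "hits N (d + 1) u / hits N d u \<le> hits N (d + 1) a / hits N d a"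
proof -
  have "avoid_weight N d u \<le> avoid_weight N d a"
    using assms(4,5)
  proof (induction u rule: dec_induct)
    case (step u)
    then show ?case using avoid_weight_Suc_le[of d N u] assms by simp
  qed simp
  then show ?thesis
    using assms hits_Suc_ratio_eq[of d N] by (simp add: divide_right_mono)
qed

lemma normalized_overlap_le_wlog:
  fixes ha hb hu ha' hb' hu' :: real
  assumes pos: "ha > 0" "hb > 0" "ha' > 0" "hb' > 0"
    and le: "ha \<le> hu" "hb \<le> hu"
    and rb: "hu'/hu \<le> hb'/hb" and ab: "hb'/hb \<le> ha'/ha"
  shows "(ha + hb - hu) / sqrt (ha * hb) \<le> (ha' + hb' - hu') / sqrt (ha' * hb')"
proof -
  define pa where "pa = ha'/ha"
  define pb where "pb = hb'/hb"
  define pu where "pu = hu'/hu"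
  define g where "g = sqrt (pa * pb)"
  have hu: "hu > 0" using pos le by linarith
  have pa0: "pa > 0" "pb > 0" unfolding pa_def pb_def using pos by auto
  have scaled: "ha' = pa * ha" "hb' = pb * hb" "hu' = pu * hu"
    unfolding pa_def pb_def pu_def using pos hu by auto
  have "pb \<le> pa" using ab unfolding pa_def pb_def .
  then have "pb \<le> g" "g \<le> pa"
    using real_sqrt_le_mono[of "pb * pb" "pa * pb"] real_sqrt_le_mono[of "pa * pb" "pa * pa"] pa0
    unfolding g_def by (auto intro: mult_right_mono mult_left_mono)
  moreover have "pu \<le> pb" using rb unfolding pu_def pb_def .
  ultimately have "hu * (g - pu) \<ge> hb * (g - pu)" "ha * (pa - g) \<ge> 0" "hb * pu \<le> hb * pb"
    using le pos by (auto intro: mult_right_mono mult_left_mono)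
  then have scaled_le: "g * (ha + hb - hu) \<le> ha' + hb' - hu'"
    unfolding scaled by (simp add: algebra_simps)
  have sq: "sqrt (ha' * hb') = g * sqrt (ha * hb)"
    unfolding scaled g_def by (simp add: real_sqrt_mult[symmetric] algebra_simps)
  have "(ha + hb - hu) / sqrt (ha * hb) = g * (ha + hb - hu) / sqrt (ha' * hb')"
    unfolding sq using pa0 pos by (simp add: g_def)
  also have "\<dots> \<le> (ha' + hb' - hu') / sqrt (ha' * hb')"
    using scaled_le pos by (intro divide_right_mono) auto
  finally show ?thesis .
qed

lemma normalized_overlap_le:
  fixes ha hb hu ha' hb' hu' :: real
  assumes "ha > 0" "hb > 0" "ha' > 0" "hb' > 0"
    and "ha \<le> hu" "hb \<le> hu"
    and "hu'/hu \<le> ha'/ha" "hu'/hu \<le> hb'/hb"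
  shows "(ha + hb - hu) / sqrt (ha * hb) \<le> (ha' + hb' - hu') / sqrt (ha' * hb')"
proof (cases "hb'/hb \<le> ha'/ha")
  case True
  then show ?thesis using normalized_overlap_le_wlog assms by blast
next
  case False
  then show ?thesis
    using normalized_overlap_le_wlog[of hb ha hb' ha' hu hu'] assms
    by (simp add: ac_simps)
qed

lemma card_ones_pos:
  assumes "boolvec n x" "x \<noteq> (\<lambda>_. 0)"
  shows "1 \<le> card (ones n x)"
proof -
  obtain i where "x i \<noteq> 0" using assms(2) by auto
  then have "i \<in> ones n x"
    using assms(1) unfolding boolvec_def ones_def by (cases "i < n") auto
  then show ?thesis by (auto simp: card_gt_0_iff Suc_le_eq)
qed

lemma normalized_dkernel_self:
  assumes "boolvec n x" "x \<noteq> (\<lambda>_. 0)" "1 \<le> d" "d \<le> n"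
  shows "normalize_kernel (dkernel n d) x x = 1"
proof -
  have "dkernel n d x x = hits n d (card (ones n x))"
    using dkernel_eq_hits[OF assms(1,1)] by simp
  moreover have "hits n d (card (ones n x)) > 0"
    using hits_pos card_ones_pos assms by auto
  ultimately show ?thesis unfolding normalize_kernel_def by simp
qed

lemma normalized_dkernel_nonneg: "0 \<le> normalize_kernel (dkernel n d) x z"
proof -
  have "0 \<le> dkernel n d x z" for x z
    unfolding dkernel_def heaviside_def by (intro sum_nonneg) auto
  then show ?thesis unfolding normalize_kernel_def by simp
qed

lemma normalized_dkernel_mono:
  assumes x: "boolvec n x" "x \<noteq> (\<lambda>_. 0)" and z: "boolvec n z" "z \<noteq> (\<lambda>_. 0)"
    and d: "1 \<le> d" "d + 1 \<le> n"
  shows "normalize_kernel (dkernel n d) x z \<le> normalize_kernel (dkernel n (d + 1)) x z"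
proof -
  define a where "a = card (ones n x)"
  define b where "b = card (ones n z)"
  define u where "u = card (ones n x \<union> ones n z)"
  have ab: "1 \<le> a" "1 \<le> b" unfolding a_def b_def using card_ones_pos x z by auto
  have union_sub: "ones n x \<union> ones n z \<subseteq> {..<n}" using ones_subset by auto
  have au: "a \<le> u" "b \<le> u" unfolding a_def b_def u_def by (auto intro: card_mono)
  have un: "u \<le> n" unfolding u_def using card_mono[OF finite_lessThan union_sub] by simp
  have eq: "normalize_kernel (dkernel n e) x z
      = (hits n e a + hits n e b - hits n e u) / sqrt (hits n e a * hits n e b)" for e
    unfolding normalize_kernel_def a_def b_def u_def using dkernel_eq_hits x(1) z(1) by simp
  show ?thesis
    unfolding eq
  proof (rule normalized_overlap_le)
    show "hits n d a > 0" "hits n d b > 0" "hits n (d + 1) a > 0" "hits n (d + 1) b > 0"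
      using hits_pos ab d by auto
    show "hits n d a \<le> hits n d u" "hits n d b \<le> hits n d u" using hits_mono au by auto
    show "hits n (d + 1) u / hits n d u \<le> hits n (d + 1) a / hits n d a"
      "hits n (d + 1) u / hits n d u \<le> hits n (d + 1) b / hits n d b"
      using hits_Suc_ratio_antimono[OF d] ab au un by auto
  qed
qed

lemma spectral_ratio_le:
  assumes diag: "\<And>i. i < m \<Longrightarrow> K' i i = K i i" and trace: "0 \<le> (\<Sum>i<m. K i i)"
    and sq: "\<And>i j. i < m \<Longrightarrow> j < m \<Longrightarrow> (K i j)\<^sup>2 \<le> (K' i j)\<^sup>2"
  shows "spectral_ratio m K' \<le> spectral_ratio m K"
proof (cases "(\<Sum>i<m. \<Sum>j<m. (K i j)\<^sup>2) = 0")
  case True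
  have "K i i = 0" if "i < m" for i
  proof -
    have "(\<Sum>j<m. (K i j)\<^sup>2) = 0"
      using True that by (simp add: sum_nonneg_eq_0_iff sum_nonneg)
    then show ?thesis using that by (simp add: sum_nonneg_eq_0_iff)
  qed
  then show ?thesis using diag unfolding spectral_ratio_def by simp
next
  case False
  have "(\<Sum>i<m. \<Sum>j<m. (K i j)\<^sup>2) \<le> (\<Sum>i<m. \<Sum>j<m. (K' i j)\<^sup>2)"
    using sq by (intro sum_mono) auto
  moreover have "0 < (\<Sum>i<m. \<Sum>j<m. (K i j)\<^sup>2)"
    using False by (simp add: order_le_neq_trans sum_nonneg)
  ultimately show ?thesis
    unfolding spectral_ratio_def using diag trace
    by (simp add: divide_left_mono)
qed

theorem mainTheorem2:
  fixes n d m :: nat and X :: "nat \<Rightarrow> (nat \<Rightarrow> nat)"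
  assumes "1 \<le> d" and "d + 1 \<le> n"
    and "\<And>i. i < m \<Longrightarrow> boolvec n (X i)"
    and "\<And>i. i < m \<Longrightarrow> X i \<noteq> (\<lambda>_. 0)"
  shows "(\<forall>i<m. \<forall>j<m.
            (normalize_kernel (dkernel n d) (X i) (X j))\<^sup>2
              \<le> (normalize_kernel (dkernel n (d+1)) (X i) (X j))\<^sup>2)
       \<and> spectral_ratio m (\<lambda>i j. normalize_kernel (dkernel n d) (X i) (X j))
           \<ge> spectral_ratio m (\<lambda>i j. normalize_kernel (dkernel n (d+1)) (X i) (X j))"
proof -
  have sq: "(normalize_kernel (dkernel n d) (X i) (X j))\<^sup>2
              \<le> (normalize_kernel (dkernel n (d+1)) (X i) (X j))\<^sup>2" if "i < m" "j < m" for i j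
    using normalized_dkernel_mono normalized_dkernel_nonneg assms that by (intro power_mono) auto
  have "normalize_kernel (dkernel n e) (X i) (X i) = 1" if "i < m" "e \<in> {d, d + 1}" for i e
    using normalized_dkernel_self assms that by auto
  then have "spectral_ratio m (\<lambda>i j. normalize_kernel (dkernel n (d+1)) (X i) (X j))
           \<le> spectral_ratio m (\<lambda>i j. normalize_kernel (dkernel n d) (X i) (X j))"
    by (intro spectral_ratio_le sq) auto
  with sq show ?thesis by blast
qed

end
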